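(* For every $d\ge1$ there exist constants $c_d>0$ and $\epsilon_d>0$, depending only on $d$, such that: if $S=\{x_0,\dots,x_d\}\subset\mathbb{R}^d$ satisfies $\mathrm{diam}(S)\le 1$ and $\mathtt{rad}(S)\ge(1-\epsilon)\sqrt{\frac{d}{2(d+1)}}$ for some $0<\epsilon\le\epsilon_d$, then there exists the vertex set $\Delta$ of a regular simplex of diameter (edge length) $1$ with $\mathrm{dist}_H(S,\Delta)\le c_d\,\epsilon$.
   Context: For a bounded set $A\subset\mathbb{R}^d$, $\mathtt{rad}(A)=\inf_{c\in\mathbb{R}^d}\sup_{y\in A}\|c-y\|_2$ is its Chebyshev radius and $\mathrm{diam}(A)=\sup_{x,y\in A}\|x-y\|_2$. A regular simplex of edge length $1$ is a set of $d+1$ points at pairwise distance exactly $1$. For nonempty compact $A,B\subset\mathbb{R}^d$, $\mathrm{dist}_H(A,B)=\max\{\sup_{a\in A}\inf_{b\in B}\|a-b\|_2,\ \sup_{b\in B}\inf_{a\in A}\|a-b\|_2\}$. *)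

theory Defs
  imports "HOL-Analysis.Analysis"
begin

definition cheb_rad :: "'a::euclidean_space set \<Rightarrow> real" where
  "cheb_rad A = (INF c. SUP y\<in>A. dist c y)"

definition haus_dist :: "'a::metric_space set \<Rightarrow> 'a set \<Rightarrow> real" where
  "haus_dist A B = max (SUP a\<in>A. INF b\<in>B. dist a b) (SUP b\<in>B. INF a\<in>A. dist a b)"

definition regular_unit_simplex :: "'a::euclidean_space set \<Rightarrow> bool" where
  "regular_unit_simplex D \<longleftrightarrow> finite D \<and> card D = DIM('a) + 1 \<and>
     (\<forall>u\<in>D. \<forall>v\<in>D. u \<noteq> v \<longrightarrow> dist u v = 1)"

end

theory Submission
  imports Defs
begin

text \<open>
  Let \<open>c\<close> be a Chebyshev centre of \<open>S\<close> and \<open>R\<close> its radius. Then \<open>c\<close> is a convex combination,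
  with weights \<open>l\<close>, of the points of \<open>S\<close> at distance \<open>R\<close> from \<open>c\<close>, and for every such active
  point \<open>q\<close> the parallel axis identity gives \<open>\<Sum>p. l p * \<bar>p - q\<bar>\<^sup>2 = 2 R\<^sup>2\<close>; as all mutual
  distances are at most 1, this is at most \<open>1 - l q\<close>. Summing over the \<open>k\<close> active points gives
  Jung's bound \<open>2 R\<^sup>2 \<le> 1 - 1/k\<close>. So if \<open>R\<close> is within a factor \<open>1 - \<epsilon>\<close> of the extremal value
  \<open>sqrt (d / (2 (d + 1)))\<close>, all \<open>d + 1\<close> points are active, every weight is at least \<open>1 / (2 (d + 1))\<close>,
  and then every squared pairwise distance is \<open>1 - O(\<epsilon>)\<close>.

  Such a configuration is moved onto a regular simplex one vertex at a time. The points at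
  distance exactly 1 from the vertices of a regular simplex \<open>y 0, \<dots>, y k\<close> form a sphere around
  its centroid in the orthogonal complement of its affine span, and a point whose squared
  distances to all \<open>y i\<close> are \<open>1 \<plusminus> \<eta>\<close> lies within \<open>O(\<eta>)\<close> of that sphere. The errors grow by a
  factor depending only on \<open>d\<close> in each of the \<open>d\<close> steps.
\<close>

definition regular_unit_simplex_vertices :: "(nat \<Rightarrow> 'a::metric_space) \<Rightarrow> nat \<Rightarrow> bool" where
  "regular_unit_simplex_vertices y k \<longleftrightarrow> (\<forall>i\<le>k. \<forall>j\<le>k. i \<noteq> j \<longrightarrow> dist (y i) (y j) = 1)"

definition centroid :: "(nat \<Rightarrow> 'a::real_vector) \<Rightarrow> nat \<Rightarrow> 'a" where
  "centroid y k = (1 / real (k + 1)) *\<^sub>R (\<Sum>i\<le>k. y i)"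

lemma sum_diff_centroid: "(\<Sum>i\<le>k. y i - centroid y k) = 0"
  by (simp add: centroid_def sum_subtractf sum_constant_scaleR)

lemma inner_diff_diff_self:
  fixes u v :: "'a::real_inner"
  shows "inner (u - v) (u - v) = inner u u - 2 * inner u v + inner v v"
  by (simp add: inner_diff_left inner_diff_right inner_commute)

lemma regular_simplex_centred_inner:
  fixes y :: "nat \<Rightarrow> 'a::real_inner"
  assumes reg: "regular_unit_simplex_vertices y k"
    and "i \<le> k" "j \<le> k"
  shows "inner (y i - centroid y k) (y j - centroid y k) =
           (if i = j then 1/2 else 0) - 1 / (2 * real (k + 1))"
proof -
  define g where "g = centroid y k"
  define s where "s i = inner (y i - g) (y i - g)" for i
  have sq_dist: "(dist (y i) (y j))\<^sup>2 = s i + s j - 2 * inner (y i - g) (y j - g)" for i j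
    using inner_diff_diff_self[of "y i - g" "y j - g"]
    by (simp add: s_def dist_norm power2_norm_eq_inner inner_commute)
  have row: "real (k + 1) * s i + (\<Sum>j\<le>k. s j) = real k" if "i \<le> k" for i
  proof -
    have "real k = (\<Sum>j\<le>k. (dist (y i) (y j))\<^sup>2)"
    proof -
      have "(\<Sum>j\<le>k. (dist (y i) (y j))\<^sup>2) = (\<Sum>j\<in>{..k} - {i}. 1)"
        using reg that unfolding regular_unit_simplex_vertices_def by (intro sum.mono_neutral_cong_right) auto
      then show ?thesis using that by simp
    qed
    also have "\<dots> = real (k + 1) * s i + (\<Sum>j\<le>k. s j) - 2 * (\<Sum>j\<le>k. inner (y i - g) (y j - g))"
      by (simp add: sq_dist sum.distrib sum_subtractf sum_distrib_left)
    also have "(\<Sum>j\<le>k. inner (y i - g) (y j - g)) = 0"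
      by (simp add: g_def sum_diff_centroid flip: inner_sum_right)
    finally show ?thesis by simp
  qed
  have s_const: "s i = real k / (2 * real (k + 1))" if "i \<le> k" for i
  proof -
    have s_eq: "s j = s 0" if "j \<le> k" for j
    proof -
      have "real (k + 1) * s j = real (k + 1) * s 0" using row[OF that] row[of 0] by linarith
      then show ?thesis by simp
    qed
    have "(\<Sum>j\<le>k. s j) = (\<Sum>j\<le>k. s 0)" by (intro sum.cong refl s_eq) simp
    then show ?thesis
      using row[OF that] row[of 0] by (simp add: field_simps del: of_nat_Suc)
  qed
  have si: "s i = real k / (2 * real (k + 1))" and sj: "s j = real k / (2 * real (k + 1))"
    using s_const \<open>i \<le> k\<close> \<open>j \<le> k\<close> by auto
  show ?thesis
  proof (cases "i = j")
    case True
    then show ?thesis using si unfolding s_def g_def by (simp add: field_simps)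
  next
    case False
    then have "inner (y i - g) (y j - g) = (s i + s j - 1) / 2"
      using sq_dist[of i j] reg \<open>i \<le> k\<close> \<open>j \<le> k\<close> by (simp add: regular_unit_simplex_vertices_def)
    also have "\<dots> = - 1 / (2 * real (k + 1))"
      unfolding si sj by (simp add: divide_simps)
    finally show ?thesis using False by (simp add: g_def)
  qed
qed

lemma regular_simplex_centred_norm:
  fixes y :: "nat \<Rightarrow> 'a::real_inner"
  assumes "regular_unit_simplex_vertices y k" and "i \<le> k"
  shows "inner (y i - centroid y k) (y i - centroid y k) = real k / (2 * real (k + 1))"
  using regular_simplex_centred_inner[OF assms(1) assms(2) assms(2)] by (simp add: divide_simps)

text \<open>The centred vertices form a tight frame, so \<open>p\<close> is the orthogonal projection of \<open>v\<close> onto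
  their span.\<close>

lemma regular_simplex_projection:
  fixes y :: "nat \<Rightarrow> 'a::real_inner" and v :: 'a
  assumes reg: "regular_unit_simplex_vertices y k"
  defines "g \<equiv> centroid y k"
  defines "p \<equiv> 2 *\<^sub>R (\<Sum>i\<le>k. inner v (y i - g) *\<^sub>R (y i - g))"
  shows regular_simplex_projection_inner: "j \<le> k \<Longrightarrow> inner p (y j - g) = inner v (y j - g)"
    and regular_simplex_projection_norm: "inner p p = 2 * (\<Sum>i\<le>k. (inner v (y i - g))\<^sup>2)"
proof -
  define a where "a i = inner v (y i - g)" for i
  have sum_a: "(\<Sum>i\<le>k. a i) = 0"
    by (simp add: a_def g_def sum_diff_centroid flip: inner_sum_right)
  show proj: "inner p (y j - g) = a j" if "j \<le> k" for j
  proof -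
    have "inner p (y j - g) = 2 * (\<Sum>i\<le>k. a i * inner (y i - g) (y j - g))"
      by (simp add: p_def a_def inner_sum_left)
    also have "\<dots> = 2 * (\<Sum>i\<le>k. a i * ((if i = j then 1/2 else 0) - 1 / (2 * real (k + 1))))"
      using regular_simplex_centred_inner[OF reg _ that] by (simp add: g_def)
    also have "\<dots> = (\<Sum>i\<le>k. (if i = j then a i else 0) - a i / real (k + 1))"
      unfolding sum_distrib_left by (intro sum.cong refl) (simp add: divide_simps algebra_simps)
    also have "\<dots> = a j - (\<Sum>i\<le>k. a i) / real (k + 1)"
      using that by (simp add: sum_subtractf sum_divide_distrib)
    finally show ?thesis using sum_a by simp
  qed
  have "inner p p = inner (2 *\<^sub>R (\<Sum>i\<le>k. a i *\<^sub>R (y i - g))) p"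
    by (simp add: p_def a_def)
  also have "\<dots> = 2 * (\<Sum>i\<le>k. a i * inner (y i - g) p)"
    by (simp add: inner_sum_left)
  also have "\<dots> = 2 * (\<Sum>i\<le>k. (a i)\<^sup>2)"
    using proj by (simp add: inner_commute power2_eq_square)
  finally show "inner p p = 2 * (\<Sum>i\<le>k. (inner v (y i - g))\<^sup>2)" by (simp add: a_def)
qed

lemma regular_simplex_near_equidistant_split:
  fixes y :: "nat \<Rightarrow> 'a::real_inner"
  assumes reg: "regular_unit_simplex_vertices y k"
    and near: "\<And>i. i \<le> k \<Longrightarrow> \<bar>(dist x (y i))\<^sup>2 - 1\<bar> \<le> \<eta>"
  obtains p q where "x = centroid y k + p + q"
    and "\<And>j. j \<le> k \<Longrightarrow> inner q (y j - centroid y k) = 0" and "inner p q = 0"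
    and "(norm p)\<^sup>2 \<le> 2 * real (k + 1) * \<eta>\<^sup>2"
    and "\<bar>(norm (x - centroid y k))\<^sup>2 + real k / (2 * real (k + 1)) - 1\<bar> \<le> \<eta>"
proof -
  define g where "g = centroid y k"
  define a where "a j = inner (x - g) (y j - g)" for j
  define p where "p = 2 *\<^sub>R (\<Sum>i\<le>k. a i *\<^sub>R (y i - g))"
  define q where "q = x - g - p"
  define T where "T = (norm (x - g))\<^sup>2 + real k / (2 * real (k + 1))"
  have sum_a: "(\<Sum>j\<le>k. a j) = 0"
    by (simp add: a_def g_def sum_diff_centroid flip: inner_sum_right)
  have sq_dist: "(dist x (y j))\<^sup>2 = T - 2 * a j" if "j \<le> k" for j
    using inner_diff_diff_self[of "x - g" "y j - g"] regular_simplex_centred_norm[OF reg that]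
    by (simp add: T_def a_def g_def dist_norm power2_norm_eq_inner)
  have T: "\<bar>T - 1\<bar> \<le> \<eta>"
  proof -
    have "real (k + 1) * (T - 1) = (\<Sum>j\<le>k. (T - 1) - 2 * a j)"
      using sum_a by (simp add: sum_subtractf flip: sum_distrib_left)
    also have "\<dots> = (\<Sum>j\<le>k. (dist x (y j))\<^sup>2 - 1)"
      by (intro sum.cong refl) (simp add: sq_dist)
    finally have eq: "real (k + 1) * (T - 1) = (\<Sum>j\<le>k. (dist x (y j))\<^sup>2 - 1)" .
    have "\<bar>\<Sum>j\<le>k. (dist x (y j))\<^sup>2 - 1\<bar> \<le> (\<Sum>j\<le>k. \<eta>)"
      by (rule order_trans[OF sum_abs sum_mono]) (simp add: near)
    then have "real (k + 1) * \<bar>T - 1\<bar> \<le> real (k + 1) * \<eta>"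
      by (simp flip: eq add: abs_mult)
    then show ?thesis by (simp del: of_nat_Suc)
  qed
  have a_sq: "(a j)\<^sup>2 \<le> \<eta>\<^sup>2" if "j \<le> k" for j
  proof -
    have "\<bar>a j\<bar> \<le> \<eta>" using sq_dist[OF that] near[OF that] T by linarith
    then show ?thesis by (metis abs_ge_zero power2_abs power_mono)
  qed
  have proj: "inner p (y j - g) = a j" if "j \<le> k" for j
    using regular_simplex_projection_inner[OF reg that] by (simp add: p_def a_def g_def)
  show thesis
  proof
    show "x = centroid y k + p + q" by (simp add: q_def g_def)
    show q_orth: "inner q (y j - centroid y k) = 0" if "j \<le> k" for j
      using proj[OF that] by (simp add: q_def a_def g_def inner_diff_left)
    have "inner p q = 2 * (\<Sum>i\<le>k. a i * inner (y i - g) q)"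
      by (simp add: p_def inner_sum_left)
    then show "inner p q = 0"
      using q_orth by (simp add: g_def inner_commute)
    have "(norm p)\<^sup>2 = 2 * (\<Sum>i\<le>k. (a i)\<^sup>2)"
      using regular_simplex_projection_norm[OF reg] by (simp add: p_def a_def g_def power2_norm_eq_inner)
    also have "\<dots> \<le> 2 * (\<Sum>i\<le>k. \<eta>\<^sup>2)"
      using a_sq by (intro mult_left_mono sum_mono) auto
    finally show "(norm p)\<^sup>2 \<le> 2 * real (k + 1) * \<eta>\<^sup>2" by (simp add: algebra_simps)
    show "\<bar>(norm (x - centroid y k))\<^sup>2 + real k / (2 * real (k + 1)) - 1\<bar> \<le> \<eta>"
      using T by (simp add: T_def g_def)
  qed
qed

lemma regular_simplex_dist_centroid_orthogonal:
  fixes y :: "nat \<Rightarrow> 'a::real_inner"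
  assumes reg: "regular_unit_simplex_vertices y k"
    and orth: "\<And>j. j \<le> k \<Longrightarrow> inner w (y j - centroid y k) = 0" and "i \<le> k"
  shows "(dist (centroid y k + w) (y i))\<^sup>2 = (norm w)\<^sup>2 + real k / (2 * real (k + 1))"
proof -
  have "centroid y k + w - y i = w - (y i - centroid y k)" by simp
  then have "(dist (centroid y k + w) (y i))\<^sup>2 = inner (w - (y i - centroid y k)) (w - (y i - centroid y k))"
    by (simp only: dist_norm power2_norm_eq_inner)
  then show ?thesis
    using inner_diff_diff_self[of w "y i - centroid y k"] orth[OF \<open>i \<le> k\<close>]
      regular_simplex_centred_norm[OF reg \<open>i \<le> k\<close>]
    by (simp add: dist_norm power2_norm_eq_inner)
qed

lemma sq_diff_le_of_diff_sq:
  fixes r t \<delta> :: real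
  assumes "0 \<le> r" "0 \<le> t" "1/2 \<le> r\<^sup>2" "\<bar>r\<^sup>2 - t\<^sup>2\<bar> \<le> \<delta>"
  shows "(r - t)\<^sup>2 \<le> 2 * \<delta>\<^sup>2"
proof -
  have "r\<^sup>2 \<le> (r + t)\<^sup>2" using assms by (intro power_mono) auto
  then have "1/2 \<le> (r + t)\<^sup>2" using assms(3) by linarith
  then have "(r - t)\<^sup>2 * (1/2) \<le> (r - t)\<^sup>2 * (r + t)\<^sup>2"
    by (rule mult_left_mono) simp
  also have "\<dots> = (r\<^sup>2 - t\<^sup>2)\<^sup>2" by (simp add: power2_eq_square algebra_simps)
  also have "\<dots> \<le> \<delta>\<^sup>2" using assms(4) by (metis abs_ge_zero power2_abs power_mono)
  finally show ?thesis by simp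
qed

lemma regular_simplex_equidistant_point:
  fixes y :: "nat \<Rightarrow> 'a::real_inner"
  assumes reg: "regular_unit_simplex_vertices y k"
    and q_orth: "\<forall>j\<le>k. inner q (y j - centroid y k) = 0" and "q \<noteq> 0"
  defines "\<rho> \<equiv> sqrt (1 - real k / (2 * real (k + 1)))"
  defines "z \<equiv> centroid y k + (\<rho> / norm q) *\<^sub>R q"
  shows "\<And>i. i \<le> k \<Longrightarrow> dist z (y i) = 1"
    and "inner p q = 0 \<Longrightarrow> (dist z (centroid y k + p + q))\<^sup>2 = (\<rho> - norm q)\<^sup>2 + (norm p)\<^sup>2"
proof -
  have \<rho>: "\<rho>\<^sup>2 = 1 - real k / (2 * real (k + 1))" by (simp add: \<rho>_def field_simps)
  show "dist z (y i) = 1" if "i \<le> k" for i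
  proof -
    have "(dist z (y i))\<^sup>2 = (norm ((\<rho> / norm q) *\<^sub>R q))\<^sup>2 + real k / (2 * real (k + 1))"
      using regular_simplex_dist_centroid_orthogonal[OF reg _ that, of "(\<rho> / norm q) *\<^sub>R q"] q_orth
      by (simp add: z_def)
    also have "\<dots> = 1" using \<open>q \<noteq> 0\<close> \<rho> by simp
    finally show ?thesis using zero_le_dist[of z "y i"] by (auto simp: power2_eq_1_iff)
  qed
  assume pq: "inner p q = 0"
  define c where "c = \<rho> / norm q - 1"
  have "z - (centroid y k + p + q) = c *\<^sub>R q - p" by (simp add: z_def c_def algebra_simps)
  then have "(dist z (centroid y k + p + q))\<^sup>2 = inner (c *\<^sub>R q - p) (c *\<^sub>R q - p)"
    by (simp only: dist_norm power2_norm_eq_inner)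
  also have "\<dots> = (c * norm q)\<^sup>2 + (norm p)\<^sup>2"
    using inner_diff_diff_self[of "c *\<^sub>R q" p] pq
    by (simp add: dot_square_norm inner_commute power2_eq_square algebra_simps)
  also have "\<dots> = (\<rho> - norm q)\<^sup>2 + (norm p)\<^sup>2" using \<open>q \<noteq> 0\<close> by (simp add: c_def algebra_simps)
  finally show "(dist z (centroid y k + p + q))\<^sup>2 = (\<rho> - norm q)\<^sup>2 + (norm p)\<^sup>2" .
qed

lemma regular_simplex_extend:
  fixes y :: "nat \<Rightarrow> 'a::real_inner"
  assumes reg: "regular_unit_simplex_vertices y k"
    and near: "\<And>i. i \<le> k \<Longrightarrow> \<bar>(dist x (y i))\<^sup>2 - 1\<bar> \<le> \<eta>"
    and \<eta>: "0 \<le> \<eta>" "\<eta> \<le> 1 / (4 * real (k + 1))"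
  obtains z where "\<And>i. i \<le> k \<Longrightarrow> dist z (y i) = 1" and "dist z x \<le> (real k + 5) * \<eta>"
proof -
  define s where "s = real k / (2 * real (k + 1))"
  define \<rho> where "\<rho> = sqrt (1 - s)"
  obtain p q where x: "x = centroid y k + p + q"
    and q_orth: "\<forall>j\<le>k. inner q (y j - centroid y k) = 0"
    and pq: "inner p q = 0" and p: "(norm p)\<^sup>2 \<le> 2 * real (k + 1) * \<eta>\<^sup>2"
    and xg: "\<bar>(norm (x - centroid y k))\<^sup>2 + s - 1\<bar> \<le> \<eta>"
    using regular_simplex_near_equidistant_split[OF reg near] unfolding s_def by metis
  have "real (k + 1) * \<eta> \<le> 1/4" using \<eta>(2) by (simp add: field_simps)
  then have "2 * real (k + 1) * \<eta>\<^sup>2 \<le> \<eta> / 2"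
    using \<eta>(1) mult_right_mono[of "real (k + 1) * \<eta>" "1/4" \<eta>] by (simp add: power2_eq_square algebra_simps)
  with p have p_small: "(norm p)\<^sup>2 \<le> \<eta> / 2" by linarith
  have "1 / (4 * real (k + 1)) \<le> 1/4" by (simp add: field_simps)
  with \<eta>(2) have \<eta>_small: "\<eta> \<le> 1/4" by linarith
  have s: "0 \<le> s" "s \<le> 1/2" by (simp_all add: s_def field_simps)
  have \<rho>: "\<rho>\<^sup>2 = 1 - s" "0 \<le> \<rho>" using s by (simp_all add: \<rho>_def)
  have "(norm (x - centroid y k))\<^sup>2 = (norm p)\<^sup>2 + (norm q)\<^sup>2"
    using pq by (simp add: x power2_norm_eq_inner inner_add_left inner_add_right inner_commute)
  then have q_near: "\<bar>\<rho>\<^sup>2 - (norm q)\<^sup>2\<bar> \<le> 3/2 * \<eta>"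
    using xg p_small \<rho>(1) \<eta>(1) zero_le_power2[of "norm p"] unfolding abs_le_iff by (intro conjI) linarith+
  then have "q \<noteq> 0" using \<rho>(1) s \<eta>_small by (auto simp: abs_le_iff)
  note z = regular_simplex_equidistant_point[OF reg q_orth this, folded s_def \<rho>_def]
  have "(dist (centroid y k + (\<rho> / norm q) *\<^sub>R q) x)\<^sup>2 \<le> 2 * (3/2 * \<eta>)\<^sup>2 + 2 * real (k + 1) * \<eta>\<^sup>2"
    using z(2)[OF pq] sq_diff_le_of_diff_sq[OF \<rho>(2) norm_ge_zero _ q_near] \<rho>(1) s p x by simp
  also have "\<dots> \<le> ((real k + 5) * \<eta>)\<^sup>2"
  proof -
    have "2 * real k + 13/2 \<le> (real k + 5)\<^sup>2" by (simp add: power2_eq_square algebra_simps)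
    then have "(2 * real k + 13/2) * \<eta>\<^sup>2 \<le> (real k + 5)\<^sup>2 * \<eta>\<^sup>2" by (simp add: mult_right_mono)
    then show ?thesis by (simp add: power_mult_distrib power2_eq_square algebra_simps)
  qed
  finally have "dist (centroid y k + (\<rho> / norm q) *\<^sub>R q) x \<le> (real k + 5) * \<eta>"
    by (rule power2_le_imp_le) (simp add: \<eta>)
  with z(1) show thesis by (rule that)
qed

lemma regular_unit_simplex_vertices_upd:
  assumes "regular_unit_simplex_vertices y k" and "\<And>i. i \<le> k \<Longrightarrow> dist z (y i) = 1"
  shows "regular_unit_simplex_vertices (y(Suc k := z)) (Suc k)"
  using assms unfolding regular_unit_simplex_vertices_def by (auto simp: le_Suc_eq dist_commute)

lemma abs_sq_sub_one_le_of_near: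
  fixes a b m E :: real
  assumes "0 \<le> E" "E \<le> 1/4" "0 \<le> m" "m \<le> 1/4" "1 - m \<le> a\<^sup>2" "0 \<le> a" "a \<le> 1"
    and "\<bar>b - a\<bar> \<le> E"
  shows "\<bar>b\<^sup>2 - 1\<bar> \<le> m + 3 * E"
proof -
  have "\<bar>b\<bar> \<le> 1 + E" using assms(6-8) by (simp add: abs_le_iff)
  then have "\<bar>b\<bar>\<^sup>2 \<le> (1 + E)\<^sup>2" by (rule power_mono) simp
  then have "b\<^sup>2 \<le> (1 + E)\<^sup>2" by simp
  also have "\<dots> \<le> 1 + 3 * E"
    using assms(1,2) mult_left_le_one_le[of E E] by (simp add: power2_eq_square algebra_simps)
  finally have upper: "b\<^sup>2 \<le> 1 + 3 * E" .
  have "1/2 \<le> a"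
  proof (rule ccontr)
    assume "\<not> 1/2 \<le> a"
    then have "a\<^sup>2 \<le> (1/2)\<^sup>2" using assms by (intro power_mono) auto
    then show False using assms by (simp add: power2_eq_square)
  qed
  then have "(a - E)\<^sup>2 \<le> b\<^sup>2" using assms by (intro power_mono) auto
  moreover have "a * E \<le> E" using assms by (simp add: mult_left_le_one_le)
  moreover have "(a - E)\<^sup>2 = a\<^sup>2 - 2 * (a * E) + E\<^sup>2" by (simp add: power2_eq_square algebra_simps)
  ultimately have "1 - m - 2 * E \<le> b\<^sup>2"
    using assms(5) zero_le_power2[of E] by linarith
  then show ?thesis using upper assms(1,3) unfolding abs_le_iff by (intro conjI) linarith+
qed

text \<open>If the first \<open>k + 1\<close> points have been moved by at most \<open>repair_const M k * \<epsilon>\<close>, the next point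
  has squared distances \<open>1 \<plusminus> (M + 3 * repair_const M k) * \<epsilon>\<close> to the moved ones, and extending
  the simplex moves it by \<open>k + 5\<close> times that.\<close>

fun repair_const :: "real \<Rightarrow> nat \<Rightarrow> real" where
  "repair_const M 0 = 0"
| "repair_const M (Suc k) = (real k + 5) * (M + 3 * repair_const M k)"

lemma repair_const_nonneg: "0 \<le> M \<Longrightarrow> 0 \<le> repair_const M k"
  by (induction k) auto

lemma repair_const_pos: "0 < M \<Longrightarrow> 0 < k \<Longrightarrow> 0 < repair_const M k"
  using repair_const_nonneg[of M "k - 1"] by (cases k) (auto simp: zero_less_mult_iff)

lemma repair_const_Suc_ge: "0 \<le> M \<Longrightarrow> repair_const M k \<le> repair_const M (Suc k)"
  using repair_const_nonneg[of M k]
  by (simp add: distrib_right mult_nonneg_nonneg add_increasing)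

lemma near_regular_approx_regular:
  fixes x :: "nat \<Rightarrow> 'a::real_inner"
  assumes M: "0 \<le> M" and \<epsilon>: "0 \<le> \<epsilon>"
  shows "\<forall>i\<le>n. \<forall>j\<le>n. i \<noteq> j \<longrightarrow> 1 - M * \<epsilon> \<le> (dist (x i) (x j))\<^sup>2 \<and> dist (x i) (x j) \<le> 1 \<Longrightarrow>
    (M + 3 * repair_const M n) * \<epsilon> \<le> 1 / (4 * real (n + 1)) \<Longrightarrow>
    \<exists>y. regular_unit_simplex_vertices y n \<and> (\<forall>i\<le>n. dist (x i) (y i) \<le> repair_const M n * \<epsilon>)"
proof (induction n)
  case 0
  show ?case by (auto simp: regular_unit_simplex_vertices_def intro!: exI[of _ x])
next
  case (Suc n)
  define E where "E = repair_const M n * \<epsilon>"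
  define \<eta> where "\<eta> = M * \<epsilon> + 3 * E"
  have mono: "E \<le> repair_const M (Suc n) * \<epsilon>"
    unfolding E_def using repair_const_Suc_ge[OF M] \<epsilon> by (rule mult_right_mono)
  have "\<eta> \<le> (M + 3 * repair_const M (Suc n)) * \<epsilon>"
    using mono by (simp add: \<eta>_def algebra_simps)
  also have "\<dots> \<le> 1 / (4 * real (Suc n + 1))" by (rule Suc.prems(2))
  also have "\<dots> \<le> 1 / (4 * real (n + 1))" by (simp add: field_simps)
  finally have small: "\<eta> \<le> 1 / (4 * real (n + 1))" .
  have "1 / (4 * real (n + 1)) \<le> 1/4" by (simp add: field_simps)
  moreover have "0 \<le> M * \<epsilon>" "0 \<le> E"
    using M \<epsilon> repair_const_nonneg[OF M] by (simp_all add: E_def)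
  ultimately have small_parts: "M * \<epsilon> \<le> 1/4" "E \<le> 1/4" "0 \<le> \<eta>"
    using small unfolding \<eta>_def by linarith+
  obtain y where y: "regular_unit_simplex_vertices y n" and y_near: "\<forall>i\<le>n. dist (x i) (y i) \<le> E"
    using Suc.IH Suc.prems(1) small by (force simp: E_def \<eta>_def algebra_simps)
  have "\<bar>(dist (x (Suc n)) (y i))\<^sup>2 - 1\<bar> \<le> \<eta>" if "i \<le> n" for i
  proof -
    have "\<bar>dist (x (Suc n)) (y i) - dist (x (Suc n)) (x i)\<bar> \<le> E"
      using abs_dist_diff_le[of "x i" "x (Suc n)" "y i"] y_near that
      by (simp add: dist_commute abs_minus_commute order_trans)
    then show ?thesis
      using abs_sq_sub_one_le_of_near[of E "M * \<epsilon>" "dist (x (Suc n)) (x i)"] Suc.prems(1) that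
        small_parts \<open>0 \<le> M * \<epsilon>\<close> \<open>0 \<le> E\<close>
      by (simp add: \<eta>_def)
  qed
  then obtain z where z: "\<And>i. i \<le> n \<Longrightarrow> dist z (y i) = 1"
    and z_near: "dist z (x (Suc n)) \<le> (real n + 5) * \<eta>"
    using regular_simplex_extend[OF y _ small_parts(3) small] by blast
  have "(real n + 5) * \<eta> = repair_const M (Suc n) * \<epsilon>" by (simp add: \<eta>_def E_def algebra_simps)
  then have "\<forall>i\<le>Suc n. dist (x i) ((y(Suc n := z)) i) \<le> repair_const M (Suc n) * \<epsilon>"
    using y_near z_near mono by (auto simp: le_Suc_eq dist_commute)
  then show ?case using regular_unit_simplex_vertices_upd[OF y z] by blast
qed

definition max_dist :: "'a::metric_space \<Rightarrow> 'a set \<Rightarrow> real" where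
  "max_dist c S = Max (dist c ` S)"

lemma dist_le_max_dist: "finite S \<Longrightarrow> y \<in> S \<Longrightarrow> dist c y \<le> max_dist c S"
  unfolding max_dist_def by (rule Max_ge) auto

lemma max_dist_attained:
  assumes "finite S" "S \<noteq> {}"
  obtains y where "y \<in> S" "max_dist c S = dist c y"
proof -
  have "Max (dist c ` S) \<in> dist c ` S" using assms by (intro Max_in) auto
  then show thesis using that unfolding max_dist_def by auto
qed

lemma max_dist_lipschitz:
  assumes "finite S" "S \<noteq> {}"
  shows "1-lipschitz_on UNIV (\<lambda>c. max_dist c S)"
proof (rule lipschitz_onI)
  have le: "max_dist c S \<le> max_dist c' S + dist c c'" for c c'
  proof -
    obtain y where "y \<in> S" "max_dist c S = dist c y" using max_dist_attained assms by blast
    then show ?thesis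
      using dist_triangle[of c y c'] dist_le_max_dist[OF assms(1), of y c'] by linarith
  qed
  show "dist (max_dist c S) (max_dist c' S) \<le> 1 * dist c c'" for c c'
    using le[of c c'] le[of c' c] by (simp add: dist_real_def dist_commute abs_le_iff)
qed simp

lemma max_dist_attains_min:
  fixes S :: "'a::heine_borel set"
  assumes "finite S" "S \<noteq> {}"
  obtains c where "\<And>c'. max_dist c S \<le> max_dist c' S"
proof -
  obtain y0 where y0: "y0 \<in> S" using assms by blast
  define r where "r = max_dist y0 S"
  have "0 \<le> r" unfolding r_def using dist_le_max_dist[OF assms(1) y0, of y0] by simp
  then obtain c where c: "c \<in> cball y0 r" and c_min: "\<And>c'. c' \<in> cball y0 r \<Longrightarrow> max_dist c S \<le> max_dist c' S"
    using continuous_attains_inf[of "cball y0 r" "\<lambda>c. max_dist c S"]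
      continuous_on_subset[OF lipschitz_on_continuous_on[OF max_dist_lipschitz[OF assms]]]
    by auto
  show thesis
  proof
    fix c'
    show "max_dist c S \<le> max_dist c' S"
    proof (cases "c' \<in> cball y0 r")
      case False
      then have "r < max_dist c' S"
        using dist_le_max_dist[OF assms(1) y0, of c'] by (simp add: dist_commute)
      moreover have "max_dist c S \<le> r" using c_min[of y0] \<open>0 \<le> r\<close> by (simp add: r_def)
      ultimately show ?thesis by simp
    qed (rule c_min)
  qed
qed

lemma cheb_rad_eq_max_dist:
  assumes "finite S" "S \<noteq> {}" and min: "\<And>c'. max_dist c S \<le> max_dist c' S"
  shows "cheb_rad S = max_dist c S"
proof -
  have "(SUP y\<in>S. dist c' y) = max_dist c' S" for c'
    using assms by (simp add: max_dist_def cSup_eq_Max)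
  then show ?thesis unfolding cheb_rad_def by (intro cInf_eq_minimum) (auto simp: min)
qed

lemma dist_add_scaleR_less_eventually:
  fixes a c y :: "'a::real_inner"
  assumes "0 < inner a (y - c)"
  shows "\<forall>\<^sub>F t in at_right 0. dist (c + t *\<^sub>R a) y < dist c y"
  unfolding eventually_at_right_field
proof (intro exI[of _ "2 * inner a (y - c) / inner a a"] conjI allI impI)
  have aa: "0 < inner a a" using assms by (cases "a = 0") auto
  then show "0 < 2 * inner a (y - c) / inner a a" using assms by simp
  fix t :: real
  assume t: "0 < t" "t < 2 * inner a (y - c) / inner a a"
  have "c + t *\<^sub>R a - y = t *\<^sub>R a - (y - c)" by simp
  then have "(dist (c + t *\<^sub>R a) y)\<^sup>2 = inner (t *\<^sub>R a - (y - c)) (t *\<^sub>R a - (y - c))"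
    by (simp only: dist_norm power2_norm_eq_inner)
  also have "\<dots> = inner (y - c) (y - c) - t * (2 * inner a (y - c) - t * inner a a)"
    unfolding inner_diff_diff_self by (simp add: algebra_simps)
  also have "inner (y - c) (y - c) = (dist c y)\<^sup>2"
    by (simp add: dist_norm dot_square_norm norm_minus_commute)
  finally have "(dist (c + t *\<^sub>R a) y)\<^sup>2 = (dist c y)\<^sup>2 - t * (2 * inner a (y - c) - t * inner a a)" .
  moreover have "0 < t * (2 * inner a (y - c) - t * inner a a)" using t aa by (simp add: field_simps)
  ultimately have "(dist (c + t *\<^sub>R a) y)\<^sup>2 < (dist c y)\<^sup>2" by linarith
  then show "dist (c + t *\<^sub>R a) y < dist c y"
    by (rule power_less_imp_less_base) simp
qed

lemma minimax_centre_in_convex_hull: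
  fixes S :: "'a::euclidean_space set"
  assumes S: "finite S" "S \<noteq> {}" and min: "\<And>c'. max_dist c S \<le> max_dist c' S"
  shows "c \<in> convex hull {y \<in> S. dist c y = max_dist c S}"
proof (rule ccontr)
  define R where "R = max_dist c S"
  define A where "A = {y \<in> S. dist c y = R}"
  assume "c \<notin> convex hull {y \<in> S. dist c y = max_dist c S}"
  then have "c \<notin> convex hull A" by (simp add: A_def R_def)
  moreover have "closed (convex hull A)"
    using S by (intro compact_imp_closed finite_imp_compact_convex_hull) (simp add: A_def)
  ultimately obtain a b where "inner a c < b" "\<forall>z \<in> convex hull A. b < inner a z"
    using separating_hyperplane_closed_point[OF convex_convex_hull] by blast
  then have towards: "0 < inner a (y - c)" if "y \<in> A" for y
    using hull_inc[OF that] by (fastforce simp: inner_diff_right)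
  have "\<forall>\<^sub>F t in at_right 0. \<forall>y\<in>S. dist (c + t *\<^sub>R a) y < R"
  proof (intro eventually_ball_finite ballI)
    fix y assume "y \<in> S"
    show "\<forall>\<^sub>F t in at_right 0. dist (c + t *\<^sub>R a) y < R"
    proof (cases "y \<in> A")
      case True
      then show ?thesis using dist_add_scaleR_less_eventually[OF towards] by (simp add: A_def)
    next
      case False
      then have "dist c y < R"
        using dist_le_max_dist[OF S(1) \<open>y \<in> S\<close>, of c] \<open>y \<in> S\<close> by (auto simp: A_def R_def less_le)
      moreover have "((\<lambda>t. dist (c + t *\<^sub>R a) y) \<longlongrightarrow> dist c y) (at_right 0)"
        by (auto intro!: tendsto_eq_intros)
      ultimately show ?thesis by (intro order_tendstoD(2))
    qed
  qed (use S in simp)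
  then obtain t where "\<forall>y\<in>S. dist (c + t *\<^sub>R a) y < R"
    using eventually_happens'[OF trivial_limit_at_right_real] by blast
  moreover obtain y where "y \<in> S" "max_dist (c + t *\<^sub>R a) S = dist (c + t *\<^sub>R a) y"
    using max_dist_attained[OF S] by blast
  ultimately have "max_dist (c + t *\<^sub>R a) S < R" by simp
  then show False using min[of "c + t *\<^sub>R a"] by (simp add: R_def)
qed

definition chebyshev_weights :: "'a::euclidean_space set \<Rightarrow> 'a \<Rightarrow> ('a \<Rightarrow> real) \<Rightarrow> bool" where
  "chebyshev_weights S c l \<longleftrightarrow> (\<forall>y\<in>S. dist c y \<le> cheb_rad S) \<and> (\<forall>y\<in>S. 0 \<le> l y) \<and> sum l S = 1 \<and>
     (\<Sum>y\<in>S. l y *\<^sub>R y) = c \<and> (\<forall>y\<in>S. l y \<noteq> 0 \<longrightarrow> dist c y = cheb_rad S)"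

lemma chebyshev_weights_exist:
  fixes S :: "'a::euclidean_space set"
  assumes S: "finite S" "S \<noteq> {}"
  obtains c l where "chebyshev_weights S c l"
proof -
  obtain c where min: "\<And>c'. max_dist c S \<le> max_dist c' S"
    using max_dist_attains_min[OF S] by blast
  have rad: "cheb_rad S = max_dist c S" by (rule cheb_rad_eq_max_dist[OF S min])
  define A where "A = {y \<in> S. dist c y = cheb_rad S}"
  have "c \<in> convex hull A" using minimax_centre_in_convex_hull[OF S min] by (simp add: A_def rad)
  then obtain u where u: "\<forall>y\<in>A. 0 \<le> u y" "sum u A = 1" "(\<Sum>y\<in>A. u y *\<^sub>R y) = c"
    using convex_hull_finite[of A] S(1) by (auto simp: A_def)
  define l where "l y = (if y \<in> A then u y else 0)" for y
  have "S \<inter> A = A" by (auto simp: A_def)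
  moreover have "(\<Sum>y\<in>S. l y *\<^sub>R y) = (\<Sum>y\<in>S. if y \<in> A then u y *\<^sub>R y else 0)"
    by (intro sum.cong) (auto simp: l_def)
  ultimately have sums: "sum l S = sum u A" "(\<Sum>y\<in>S. l y *\<^sub>R y) = (\<Sum>y\<in>A. u y *\<^sub>R y)"
    using sum.inter_restrict[OF S(1), of u A] sum.inter_restrict[OF S(1), of "\<lambda>y. u y *\<^sub>R y" A]
    by (simp_all add: l_def)
  have "chebyshev_weights S c l"
    unfolding chebyshev_weights_def
    using dist_le_max_dist[OF S(1)] u sums by (auto simp: rad l_def A_def)
  then show thesis by (rule that)
qed

lemma weighted_sum_sq_dist:
  fixes S :: "'a::real_inner set"
  assumes "finite S" "sum l S = 1" "(\<Sum>p\<in>S. l p *\<^sub>R p) = c"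
  shows "(\<Sum>p\<in>S. l p * (dist p q)\<^sup>2) = (\<Sum>p\<in>S. l p * (dist p c)\<^sup>2) + (dist q c)\<^sup>2"
proof -
  have "(\<Sum>p\<in>S. l p *\<^sub>R (p - c)) = 0"
    using assms by (simp add: scaleR_diff_right sum_subtractf flip: scaleR_sum_left)
  moreover have "(\<Sum>p\<in>S. l p * inner (p - c) (q - c)) = inner (\<Sum>p\<in>S. l p *\<^sub>R (p - c)) (q - c)"
    by (simp add: inner_sum_left)
  ultimately have cross: "(\<Sum>p\<in>S. l p * inner (p - c) (q - c)) = 0" by simp
  have expand: "(dist p q)\<^sup>2 = (dist p c)\<^sup>2 - 2 * inner (p - c) (q - c) + (dist q c)\<^sup>2" for p
  proof -
    have "p - q = (p - c) - (q - c)" by simp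
    then show ?thesis
      using inner_diff_diff_self[of "p - c" "q - c"] by (simp add: dist_norm dot_square_norm)
  qed
  have "(\<Sum>p\<in>S. l p * (dist p q)\<^sup>2) =
      (\<Sum>p\<in>S. l p * (dist p c)\<^sup>2 - 2 * (l p * inner (p - c) (q - c)) + l p * (dist q c)\<^sup>2)"
    by (intro sum.cong refl) (simp add: expand algebra_simps)
  also have "\<dots> = (\<Sum>p\<in>S. l p * (dist p c)\<^sup>2) - 2 * (\<Sum>p\<in>S. l p * inner (p - c) (q - c))
      + (\<Sum>p\<in>S. l p) * (dist q c)\<^sup>2"
    by (simp add: sum.distrib sum_subtractf sum_distrib_left sum_distrib_right)
  finally show ?thesis using cross assms(2) by simp
qed

lemma sq_dist_le_one_of_diameter:
  assumes "finite S" "diameter S \<le> 1" "x \<in> S" "y \<in> S"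
  shows "(dist x y)\<^sup>2 \<le> 1"
proof -
  have "dist x y \<le> 1"
    using diameter_bounded_bound[OF finite_imp_bounded[OF assms(1)] assms(3,4)] assms(2) by linarith
  then show ?thesis by (simp add: power_le_one)
qed

lemma weighted_sum_sq_dist_le:
  assumes "finite S" "diameter S \<le> 1" "\<And>p. p \<in> S \<Longrightarrow> 0 \<le> l p" "q \<in> S"
  shows "(\<Sum>p\<in>S. l p * (dist p q)\<^sup>2) \<le> sum l S - l q"
proof -
  have "(\<Sum>p\<in>S. l p * (dist p q)\<^sup>2) \<le> (\<Sum>p\<in>S. l p * (if p = q then 0 else 1))"
    using assms(3) sq_dist_le_one_of_diameter[OF assms(1,2) _ assms(4)]
    by (intro sum_mono mult_left_mono) auto
  also have "\<dots> = sum l S - l q"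
    using assms(1,4) by (simp add: if_distrib sum.If_cases Diff_eq[symmetric] sum_diff1)
  finally show ?thesis .
qed

lemma chebyshev_weights_sum_sq_dist:
  assumes w: "chebyshev_weights S c l" and "finite S" and "dist c q = cheb_rad S"
  shows "(\<Sum>p\<in>S. l p * (dist p q)\<^sup>2) = 2 * (cheb_rad S)\<^sup>2"
proof -
  have "(\<Sum>p\<in>S. l p * (dist p c)\<^sup>2) = (\<Sum>p\<in>S. l p * (cheb_rad S)\<^sup>2)"
    using w by (intro sum.cong refl) (auto simp: chebyshev_weights_def dist_commute)
  then show ?thesis
    using weighted_sum_sq_dist[of S l c q] w assms(2,3)
    by (simp add: chebyshev_weights_def dist_commute flip: sum_distrib_right)
qed

lemma chebyshev_weights_active_le:
  assumes w: "chebyshev_weights S c l" and "finite S" "diameter S \<le> 1"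
    and "q \<in> S" "dist c q = cheb_rad S"
  shows "2 * (cheb_rad S)\<^sup>2 \<le> 1 - l q"
  using chebyshev_weights_sum_sq_dist[OF w assms(2,5)] weighted_sum_sq_dist_le[OF assms(2,3) _ assms(4), of l] w
  by (simp add: chebyshev_weights_def)

lemma jung_active_points:
  assumes w: "chebyshev_weights S c l" and S: "finite S" "diameter S \<le> 1"
  defines "A \<equiv> {q \<in> S. dist c q = cheb_rad S}"
  shows "real (card A) * (2 * (cheb_rad S)\<^sup>2) \<le> real (card A) - 1"
proof -
  have "sum l A = sum l S"
    using w S(1) by (intro sum.mono_neutral_left) (auto simp: A_def chebyshev_weights_def)
  then have "sum l A = 1" using w by (simp add: chebyshev_weights_def)
  moreover have "(\<Sum>q\<in>A. 2 * (cheb_rad S)\<^sup>2) \<le> (\<Sum>q\<in>A. 1 - l q)"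
    using chebyshev_weights_active_le[OF w S] by (intro sum_mono) (simp add: A_def)
  ultimately show ?thesis by (simp add: sum_subtractf)
qed

lemma near_jung_radius_sq:
  fixes d \<epsilon> R :: real
  assumes "0 \<le> d" "\<epsilon> \<le> 1" "(1 - \<epsilon>) * sqrt (d / (2 * (d + 1))) \<le> R"
  shows "(1 - 2 * \<epsilon>) * d \<le> (d + 1) * (2 * R\<^sup>2)"
proof -
  have "((1 - \<epsilon>) * sqrt (d / (2 * (d + 1))))\<^sup>2 \<le> R\<^sup>2"
    using assms by (intro power_mono) auto
  then have "(1 - \<epsilon>)\<^sup>2 * (d / (2 * (d + 1))) \<le> R\<^sup>2"
    using assms(1) by (simp add: power_mult_distrib)
  moreover have "(1 - 2 * \<epsilon>) * (d / (2 * (d + 1))) \<le> (1 - \<epsilon>)\<^sup>2 * (d / (2 * (d + 1)))"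
    using assms(1) by (intro mult_right_mono) (auto simp: power2_eq_square algebra_simps)
  ultimately have "(1 - 2 * \<epsilon>) * (d / (2 * (d + 1))) \<le> R\<^sup>2" by linarith
  then show ?thesis using assms(1) by (simp add: field_simps)
qed

lemma near_jung_all_active:
  fixes S :: "'a::euclidean_space set"
  assumes w: "chebyshev_weights S c l" and S: "finite S" "card S \<le> d + 1" "diameter S \<le> 1"
    and \<epsilon>: "2 * \<epsilon> * (real d)\<^sup>2 < 1"
    and Q: "(1 - 2 * \<epsilon>) * real d \<le> (real d + 1) * (2 * (cheb_rad S)\<^sup>2)"
  shows "card S = d + 1" and "\<forall>q\<in>S. dist c q = cheb_rad S"
proof -
  define A where "A = {q \<in> S. dist c q = cheb_rad S}"
  define Q where "Q = 2 * (cheb_rad S)\<^sup>2"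
  have A_sub: "A \<subseteq> S" by (auto simp: A_def)
  have jung: "real (card A) * Q \<le> real (card A) - 1"
    using jung_active_points[OF w S(1,3)] by (simp add: A_def Q_def)
  \<comment> \<open>With at most \<open>d\<close> active points Jung's bound contradicts the near-extremal radius.\<close>
  have "d + 1 \<le> card A"
  proof (rule ccontr)
    assume "\<not> d + 1 \<le> card A"
    then have k: "real (card A) \<le> real d" by simp
    have k1: "1 \<le> real (card A)" using jung by (cases "card A = 0") auto
    have "real (card A) * (real d * Q) \<le> real d * (real (card A) - 1)"
      using mult_left_mono[OF jung, of "real d"] by (simp add: algebra_simps)
    also have "\<dots> \<le> real (card A) * (real d - 1)" using k by (simp add: algebra_simps)
    finally have "real d * Q \<le> real d - 1" using k1 by simp
    then have "(real d + 1) * (real d * Q) \<le> (real d + 1) * (real d - 1)" by (simp add: mult_left_mono)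
    moreover have "real d * ((1 - 2 * \<epsilon>) * real d) \<le> real d * ((real d + 1) * Q)"
      using Q by (simp add: mult_left_mono Q_def)
    ultimately have "(1 - 2 * \<epsilon>) * (real d)\<^sup>2 \<le> (real d)\<^sup>2 - 1"
      by (simp add: power2_eq_square algebra_simps)
    then show False using \<epsilon> by (simp add: algebra_simps)
  qed
  then have "card A = card S" using card_mono[OF S(1) A_sub] S(2) by simp
  then have "A = S" using card_subset_eq[OF S(1) A_sub] by simp
  then show "card S = d + 1" and "\<forall>q\<in>S. dist c q = cheb_rad S"
    using \<open>d + 1 \<le> card A\<close> S(2) by (auto simp: A_def)
qed

lemma near_jung_weights:
  fixes S :: "'a::euclidean_space set"
  assumes w: "chebyshev_weights S c l" and S: "finite S" "card S = d + 1" "diameter S \<le> 1"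
    and active: "\<forall>q\<in>S. dist c q = cheb_rad S"
    and \<epsilon>: "2 * \<epsilon> * (real d)\<^sup>2 \<le> 1/2"
    and Q: "(1 - 2 * \<epsilon>) * real d \<le> (real d + 1) * (2 * (cheb_rad S)\<^sup>2)"
    and "y \<in> S"
  shows near_jung_weights_rest: "1 - l y \<le> real d * (1 - 2 * (cheb_rad S)\<^sup>2)"
    and near_jung_weights_ge: "1 / (2 * (real d + 1)) \<le> l y"
proof -
  define Q where "Q = 2 * (cheb_rad S)\<^sup>2"
  have "1 - l y = sum l (S - {y})"
    using w sum.remove[OF S(1) \<open>y \<in> S\<close>, of l] by (simp add: chebyshev_weights_def)
  also have "\<dots> \<le> (\<Sum>z\<in>S - {y}. 1 - Q)"
    using chebyshev_weights_active_le[OF w S(1,3)] active by (intro sum_mono) (force simp: Q_def)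
  finally show rest: "1 - l y \<le> real d * (1 - 2 * (cheb_rad S)\<^sup>2)"
    using S(2) \<open>y \<in> S\<close> by (simp add: Q_def)
  have "(real d + 1) * (1 - real d * (1 - Q)) \<le> (real d + 1) * l y"
    using rest by (intro mult_left_mono) (auto simp: Q_def)
  moreover have "real d * ((1 - 2 * \<epsilon>) * real d) \<le> real d * ((real d + 1) * Q)"
    using Q by (simp add: mult_left_mono Q_def)
  ultimately have "1/2 \<le> (real d + 1) * l y"
    using \<epsilon> by (simp add: power2_eq_square algebra_simps)
  then show "1 / (2 * (real d + 1)) \<le> l y" by (simp add: field_simps)
qed

lemma near_jung_pairwise_dist:
  fixes S :: "'a::euclidean_space set"
  assumes w: "chebyshev_weights S c l" and S: "finite S" "card S = d + 1" "diameter S \<le> 1"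
    and active: "\<forall>q\<in>S. dist c q = cheb_rad S"
    and \<epsilon>: "2 * \<epsilon> * (real d)\<^sup>2 \<le> 1/2"
    and Q: "(1 - 2 * \<epsilon>) * real d \<le> (real d + 1) * (2 * (cheb_rad S)\<^sup>2)"
    and pq: "p \<in> S" "q \<in> S" "p \<noteq> q"
  shows "1 - 4 * real d * (real d + 1) * \<epsilon> \<le> (dist p q)\<^sup>2"
proof -
  define Q where "Q = 2 * (cheb_rad S)\<^sup>2"
  have l: "\<And>y. y \<in> S \<Longrightarrow> 0 \<le> l y" "sum l S = 1" using w by (auto simp: chebyshev_weights_def)
  note weights = near_jung_weights[OF w S active \<epsilon> Q]
  have D: "0 \<le> 1 - (dist y q)\<^sup>2" if "y \<in> S" for y
    using sq_dist_le_one_of_diameter[OF S(1,3) that pq(2)] by simp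
  have "l p * (1 - (dist p q)\<^sup>2) \<le> (\<Sum>y\<in>S - {q}. l y * (1 - (dist y q)\<^sup>2))"
    using pq S(1) D l(1) by (intro member_le_sum) auto
  also have "\<dots> = (\<Sum>y\<in>S. l y * (1 - (dist y q)\<^sup>2)) - l q"
    using pq(2) S(1) by (simp add: sum_diff1)
  also have "\<dots> = 1 - Q - l q"
    using chebyshev_weights_sum_sq_dist[OF w S(1)] active pq(2) l(2)
    by (simp add: right_diff_distrib sum_subtractf Q_def)
  also have "\<dots> \<le> 2 * \<epsilon> * real d" using weights(1)[OF pq(2)] Q by (simp add: Q_def algebra_simps)
  finally have "l p * (1 - (dist p q)\<^sup>2) \<le> 2 * \<epsilon> * real d" .
  moreover have "1 / (2 * (real d + 1)) * (1 - (dist p q)\<^sup>2) \<le> l p * (1 - (dist p q)\<^sup>2)"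
    using weights(2)[OF pq(1)] D[OF pq(1)] by (rule mult_right_mono)
  ultimately have "(1 - (dist p q)\<^sup>2) / (2 * (real d + 1)) \<le> 2 * \<epsilon> * real d" by simp
  then show ?thesis by (simp add: field_simps)
qed

lemma near_jung_extremal:
  fixes S :: "'a::euclidean_space set"
  assumes S: "finite S" "S \<noteq> {}" "card S \<le> d + 1" "diameter S \<le> 1"
    and \<epsilon>: "\<epsilon> \<le> 1 / (4 * (real d)\<^sup>2)"
    and rad: "(1 - \<epsilon>) * sqrt (real d / (2 * (real d + 1))) \<le> cheb_rad S"
  shows "card S = d + 1"
    and "\<And>p q. p \<in> S \<Longrightarrow> q \<in> S \<Longrightarrow> p \<noteq> q \<Longrightarrow> 1 - 4 * real d * (real d + 1) * \<epsilon> \<le> (dist p q)\<^sup>2"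
proof -
  obtain c l where w: "chebyshev_weights S c l" using chebyshev_weights_exist[OF S(1,2)] .
  have \<epsilon>_d: "2 * \<epsilon> * (real d)\<^sup>2 \<le> 1/2"
  proof (cases "d = 0")
    case False
    then show ?thesis using \<epsilon> by (simp add: field_simps)
  qed simp
  have "\<epsilon> \<le> 1"
  proof (cases "d = 0")
    case False
    then have "1 \<le> (real d)\<^sup>2" by simp
    then have "1 / (4 * (real d)\<^sup>2) \<le> 1 / 4" using False by (intro divide_left_mono) auto
    with \<epsilon> show ?thesis by linarith
  qed (use \<epsilon> in simp)
  then have Q: "(1 - 2 * \<epsilon>) * real d \<le> (real d + 1) * (2 * (cheb_rad S)\<^sup>2)"
    using near_jung_radius_sq[OF _ _ rad] by simp
  have "2 * \<epsilon> * (real d)\<^sup>2 < 1" using \<epsilon>_d by simp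
  note all_active = near_jung_all_active[OF w S(1,3,4) this Q]
  show "card S = d + 1" by (rule all_active(1))
  show "1 - 4 * real d * (real d + 1) * \<epsilon> \<le> (dist p q)\<^sup>2" if "p \<in> S" "q \<in> S" "p \<noteq> q" for p q
    using near_jung_pairwise_dist[OF w S(1) all_active(1) S(4) all_active(2) \<epsilon>_d Q that] .
qed

lemma regular_unit_simplex_image:
  fixes y :: "nat \<Rightarrow> 'a::euclidean_space"
  assumes "regular_unit_simplex_vertices y DIM('a)"
  shows "regular_unit_simplex (y ` {..DIM('a)})"
proof -
  have "inj_on y {..DIM('a)}"
    using assms by (auto intro!: inj_onI simp: regular_unit_simplex_vertices_def) (metis dist_self zero_neq_one)
  then show ?thesis
    using assms by (auto simp: regular_unit_simplex_def regular_unit_simplex_vertices_def card_image)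
qed

lemma haus_dist_image_le:
  assumes "finite I" "I \<noteq> {}" "\<And>i. i \<in> I \<Longrightarrow> dist (x i) (y i) \<le> r"
  shows "haus_dist (x ` I) (y ` I) \<le> r"
proof -
  have "(SUP a\<in>x ` I. INF b\<in>y ` I. dist a b) \<le> r"
  proof (rule cSUP_least)
    fix a assume "a \<in> x ` I"
    then obtain i where "i \<in> I" "a = x i" by auto
    then have "(INF b\<in>y ` I. dist a b) \<le> dist a (y i)"
      using assms(1) by (intro cINF_lower) (auto intro!: bdd_belowI[of _ 0])
    then show "(INF b\<in>y ` I. dist a b) \<le> r" using assms(3) \<open>i \<in> I\<close> \<open>a = x i\<close> by force
  qed (use assms(2) in simp)
  moreover have "(SUP b\<in>y ` I. INF a\<in>x ` I. dist a b) \<le> r"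
  proof (rule cSUP_least)
    fix b assume "b \<in> y ` I"
    then obtain i where "i \<in> I" "b = y i" by auto
    then have "(INF a\<in>x ` I. dist a b) \<le> dist (x i) b"
      using assms(1) by (intro cINF_lower) (auto intro!: bdd_belowI[of _ 0])
    then show "(INF a\<in>x ` I. dist a b) \<le> r" using assms(3) \<open>i \<in> I\<close> \<open>b = y i\<close> by force
  qed (use assms(2) in simp)
  ultimately show ?thesis by (simp add: haus_dist_def)
qed

definition jung_defect_const :: "nat \<Rightarrow> real" where
  "jung_defect_const d = 4 * real d * (real d + 1)"

definition stability_const :: "nat \<Rightarrow> real" where
  "stability_const d = repair_const (jung_defect_const d) d"

definition stability_eps :: "nat \<Rightarrow> real" where
  "stability_eps d = min (1 / (4 * (real d)\<^sup>2))
     (1 / (4 * real (d + 1) * (jung_defect_const d + 3 * stability_const d)))"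

lemma stability_const_pos: "0 < d \<Longrightarrow> 0 < stability_const d"
  unfolding stability_const_def jung_defect_const_def by (rule repair_const_pos) auto

lemma stability_eps_pos:
  assumes "0 < d"
  shows "0 < stability_eps d"
proof -
  have "0 < jung_defect_const d + 3 * stability_const d"
    using stability_const_pos[OF assms] assms by (simp add: jung_defect_const_def add_pos_pos)
  then show ?thesis using assms by (simp add: stability_eps_def)
qed

lemma regular_simplex_stability:
  fixes x :: "nat \<Rightarrow> 'a::euclidean_space"
  assumes diam: "diameter (x ` {..DIM('a)}) \<le> 1"
    and \<epsilon>: "0 \<le> \<epsilon>" "\<epsilon> \<le> stability_eps DIM('a)"
    and rad: "(1 - \<epsilon>) * sqrt (real DIM('a) / (2 * (real DIM('a) + 1))) \<le> cheb_rad (x ` {..DIM('a)})"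
  shows "\<exists>D. regular_unit_simplex D \<and> haus_dist (x ` {..DIM('a)}) D \<le> stability_const DIM('a) * \<epsilon>"
proof -
  define d where "d = DIM('a)"
  define M where "M = jung_defect_const d"
  have M: "0 \<le> M" by (simp add: M_def jung_defect_const_def)
  have S: "finite (x ` {..d})" "x ` {..d} \<noteq> {}" "card (x ` {..d}) \<le> d + 1"
    using card_image_le[of "{..d}" x] by auto
  have \<epsilon>_jung: "\<epsilon> \<le> 1 / (4 * (real d)\<^sup>2)" using \<epsilon>(2) by (simp add: stability_eps_def d_def)
  have \<epsilon>_repair: "(M + 3 * repair_const M d) * \<epsilon> \<le> 1 / (4 * real (d + 1))"
  proof -
    have "0 < M" by (simp add: M_def jung_defect_const_def d_def)
    then have K: "0 < M + 3 * repair_const M d" using repair_const_nonneg[of M d] by simp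
    have "\<epsilon> \<le> 1 / (4 * real (d + 1) * (M + 3 * repair_const M d))"
      using \<epsilon>(2) by (simp add: stability_eps_def stability_const_def M_def d_def)
    then have "(M + 3 * repair_const M d) * \<epsilon>
        \<le> (M + 3 * repair_const M d) * (1 / (4 * real (d + 1) * (M + 3 * repair_const M d)))"
      using K by (intro mult_left_mono) auto
    also have "\<dots> = 1 / (4 * real (d + 1))" using K by simp
    finally show ?thesis .
  qed
  note jung = near_jung_extremal[OF S diam[folded d_def] \<epsilon>_jung rad[folded d_def]]
  have inj: "inj_on x {..d}" using jung(1) by (intro eq_card_imp_inj_on) auto
  have "\<forall>i\<le>d. \<forall>j\<le>d. i \<noteq> j \<longrightarrow> 1 - M * \<epsilon> \<le> (dist (x i) (x j))\<^sup>2 \<and> dist (x i) (x j) \<le> 1"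
  proof (intro allI impI conjI)
    fix i j assume ij: "i \<le> d" "j \<le> d" "i \<noteq> j"
    then have "x i \<noteq> x j" using inj by (auto simp: inj_on_def)
    then show "1 - M * \<epsilon> \<le> (dist (x i) (x j))\<^sup>2"
      using jung(2)[of "x i" "x j"] ij by (simp add: M_def jung_defect_const_def mult.assoc)
    show "dist (x i) (x j) \<le> 1"
      using diameter_bounded_bound[OF finite_imp_bounded[OF S(1)], of "x i" "x j"] diam ij
      by (simp add: d_def)
  qed
  then obtain y where y: "regular_unit_simplex_vertices y d"
    and y_near: "\<forall>i\<le>d. dist (x i) (y i) \<le> repair_const M d * \<epsilon>"
    using near_regular_approx_regular[OF M \<epsilon>(1) _ \<epsilon>_repair] by blast
  have "regular_unit_simplex (y ` {..d})" using regular_unit_simplex_image y by (simp add: d_def)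
  moreover have "haus_dist (x ` {..d}) (y ` {..d}) \<le> stability_const d * \<epsilon>"
    using y_near by (intro haus_dist_image_le) (auto simp: stability_const_def M_def)
  ultimately show ?thesis unfolding d_def by blast
qed

theorem mainTheorem8:
  "\<exists>c \<epsilon>\<^sub>d. c > 0 \<and> \<epsilon>\<^sub>d > 0 \<and>
     (\<forall>(x :: nat \<Rightarrow> real ^ 'n::finite) \<epsilon>.
        diameter (x ` {0..CARD('n)}) \<le> 1 \<longrightarrow>
        0 < \<epsilon> \<longrightarrow> \<epsilon> \<le> \<epsilon>\<^sub>d \<longrightarrow>
        cheb_rad (x ` {0..CARD('n)}) \<ge> (1 - \<epsilon>) * sqrt (real CARD('n) / (2 * (real CARD('n) + 1))) \<longrightarrow>
        (\<exists>D. regular_unit_simplex D \<and> haus_dist (x ` {0..CARD('n)}) D \<le> c * \<epsilon>))"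
proof (rule exI[of _ "stability_const CARD('n)"], rule exI[of _ "stability_eps CARD('n)"],
    intro conjI allI impI)
  show "0 < stability_const CARD('n)" by (simp add: stability_const_pos)
  show "0 < stability_eps CARD('n)" by (simp add: stability_eps_pos)
  fix x :: "nat \<Rightarrow> real ^ 'n" and \<epsilon> :: real
  assume "diameter (x ` {0..CARD('n)}) \<le> 1" "0 < \<epsilon>" "\<epsilon> \<le> stability_eps CARD('n)"
    "(1 - \<epsilon>) * sqrt (real CARD('n) / (2 * (real CARD('n) + 1))) \<le> cheb_rad (x ` {0..CARD('n)})"
  then show "\<exists>D. regular_unit_simplex D \<and> haus_dist (x ` {0..CARD('n)}) D \<le> stability_const CARD('n) * \<epsilon>"
    using regular_simplex_stability[of x \<epsilon>] by (simp add: atLeast0AtMost)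
qed

end
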